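(* Let $C=\{c_1,\dots,c_m\}\subset\mathbb{R}$ with $c_1\le\dots\le c_m$, let $\mathcal{I}$ be a finite set of closed intervals in $\mathbb{R}$ and $f\ge0$ an integer such that every $I\in\mathcal{I}$ satisfies $|I\cap C|>f$. Let $T$ be the output of the following greedy procedure: start with $T=\emptyset$; for $t=1,\dots,m$ in order, if there exist $i,j$ with $1\le i\le t\le j\le m$ and $\delta_{i,j}(f)\ge|T\cap C_{i,j}|+(j-t+1)$ (current $T$), add $c_t$ to $T$. Write $T=\{c_{k_1},\dots,c_{k_r}\}$ with $k_1<\dots<k_r$, and let $\mathsf{opt}$ be the minimum size of a subset $S\subseteq C$ satisfying $|S\cap C_{i,j}|\ge\delta_{i,j}(f)$ for all $1\le i\le j\le m$. Then for every $t\in\{1,\dots,r\}$ there exists $T^*\subseteq C$ such that (1) $|T^*\cap C_{i,j}|\ge\delta_{i,j}(f)$ for all $1\le i\le j\le m$, (2) $|T^*|=\mathsf{opt}$, and (3) $\{c_{k_1},\dots,c_{k_t}\}\subseteq T^*$.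
   Context: For a set of points $X$, a set of intervals is $X$-disjoint if every point of $X$ lies in at most one of its intervals. For $1\le i\le j\le m$: $C_{i,j}=\{c_i,\dots,c_j\}$; $\mathcal{I}_{i,j}=\{I\in\mathcal{I}: I\cap C\subseteq C_{i,j}\}$; for $J\subseteq C_{i,j}$, $\delta_{i,j}(J)$ is the maximum size of a $(C_{i,j}\setminus J)$-disjoint subset of $\mathcal{I}_{i,j}$; and $\delta_{i,j}(f)=\max_{J\subseteq C_{i,j},|J|\le f}\delta_{i,j}(J)$. *)

theory Defs
  imports Complex_Main
begin

definition pts :: "(nat \<Rightarrow> real) \<Rightarrow> nat \<Rightarrow> real set" where
  "pts c m = c ` {1..m}"

definition Cij :: "(nat \<Rightarrow> real) \<Rightarrow> nat \<Rightarrow> nat \<Rightarrow> real set" where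
  "Cij c i j = c ` {i..j}"

definition Iij :: "(nat \<Rightarrow> real) \<Rightarrow> nat \<Rightarrow> real set set \<Rightarrow> nat \<Rightarrow> nat \<Rightarrow> real set set" where
  "Iij c m \<I> i j = {I \<in> \<I>. I \<inter> pts c m \<subseteq> Cij c i j}"

definition X_disjoint :: "real set \<Rightarrow> real set set \<Rightarrow> bool" where
  "X_disjoint X F \<longleftrightarrow> (\<forall>x\<in>X. card {I \<in> F. x \<in> I} \<le> 1)"

definition deltaJ :: "(nat \<Rightarrow> real) \<Rightarrow> nat \<Rightarrow> real set set \<Rightarrow> nat \<Rightarrow> nat \<Rightarrow> real set \<Rightarrow> nat" where
  "deltaJ c m \<I> i j J =
     Max {card F | F. F \<subseteq> Iij c m \<I> i j \<and> X_disjoint (Cij c i j - J) F}"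

definition delta :: "(nat \<Rightarrow> real) \<Rightarrow> nat \<Rightarrow> real set set \<Rightarrow> nat \<Rightarrow> nat \<Rightarrow> nat \<Rightarrow> nat" where
  "delta c m \<I> i j f =
     Max {deltaJ c m \<I> i j J | J. J \<subseteq> Cij c i j \<and> card J \<le> f}"

fun greedy_upto :: "(nat \<Rightarrow> real) \<Rightarrow> nat \<Rightarrow> real set set \<Rightarrow> nat \<Rightarrow> nat \<Rightarrow> real set" where
  "greedy_upto c m \<I> f 0 = {}"
| "greedy_upto c m \<I> f (Suc t) =
     (let T = greedy_upto c m \<I> f t in
      if (\<exists>i j. 1 \<le> i \<and> i \<le> Suc t \<and> Suc t \<le> j \<and> j \<le> m \<and>
               delta c m \<I> i j f \<ge> card (T \<inter> Cij c i j) + (j - Suc t + 1))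
      then insert (c (Suc t)) T else T)"

definition greedy :: "(nat \<Rightarrow> real) \<Rightarrow> nat \<Rightarrow> real set set \<Rightarrow> nat \<Rightarrow> real set" where
  "greedy c m \<I> f = greedy_upto c m \<I> f m"

definition feasible :: "(nat \<Rightarrow> real) \<Rightarrow> nat \<Rightarrow> real set set \<Rightarrow> nat \<Rightarrow> real set \<Rightarrow> bool" where
  "feasible c m \<I> f S \<longleftrightarrow>
     (\<forall>i j. 1 \<le> i \<and> i \<le> j \<and> j \<le> m \<longrightarrow> card (S \<inter> Cij c i j) \<ge> delta c m \<I> i j f)"

definition opt :: "(nat \<Rightarrow> real) \<Rightarrow> nat \<Rightarrow> real set set \<Rightarrow> nat \<Rightarrow> nat" where
  "opt c m \<I> f = Min {card S | S. S \<subseteq> pts c m \<and> feasible c m \<I> f S}"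

definition greedy_indices :: "(nat \<Rightarrow> real) \<Rightarrow> nat \<Rightarrow> real set set \<Rightarrow> nat \<Rightarrow> nat list" where
  "greedy_indices c m \<I> f = sorted_list_of_set {k \<in> {1..m}. c k \<in> greedy c m \<I> f}"

end

theory Submission
  imports Defs
begin

text \<open>Since c is injective, points can be replaced by their indices, and then the greedy
  procedure and feasibility only involve the numbers \<delta>_{i,j}(f); so we study the greedy
  procedure for an arbitrary demand d i j on the windows {i..j} of {1..m}. An exchange
  argument turns every feasible S, without making it larger, into a feasible set that agrees
  with the greedy set on {1..t}, one t at a time. If the greedy procedure takes t, then t
  belongs to S, for otherwise the window {i..j} that made the greedy procedure take t would
  contain at most |T \<inter> {i..t-1}| + (j - t) < d i j points of S. If it skips t but
  t \<in> S, then moving t to the first gap of S after t keeps S feasible. For t = m this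
  shows that the greedy set T is itself optimal, so T* = T works for every t. The hypothesis
  |I \<inter> C| > f only ensures \<delta>_{i,j}(f) \<le> |C_{i,j}|, i.e. that C itself is feasible.\<close>

fun greedy_idx :: "(nat \<Rightarrow> nat \<Rightarrow> nat) \<Rightarrow> nat \<Rightarrow> nat \<Rightarrow> nat set" where
  "greedy_idx d m 0 = {}"
| "greedy_idx d m (Suc t) =
     (if \<exists>i j. 1 \<le> i \<and> i \<le> Suc t \<and> Suc t \<le> j \<and> j \<le> m \<and>
              d i j \<ge> card (greedy_idx d m t \<inter> {i..j}) + (j - Suc t + 1)
      then insert (Suc t) (greedy_idx d m t) else greedy_idx d m t)"

definition meets_demand :: "(nat \<Rightarrow> nat \<Rightarrow> nat) \<Rightarrow> nat \<Rightarrow> nat set \<Rightarrow> bool" where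
  "meets_demand d m S \<longleftrightarrow> (\<forall>i j. 1 \<le> i \<and> i \<le> j \<and> j \<le> m \<longrightarrow> d i j \<le> card (S \<inter> {i..j}))"

lemma greedy_idx_subset: "greedy_idx d m t \<subseteq> {1..t}"
  by (induction t) auto

lemma card_Int_atLeastAtMost_split:
  fixes S :: "nat set"
  assumes "finite S" "i \<le> u" "u \<le> j"
  shows "card (S \<inter> {i..j}) = card (S \<inter> {i..<u}) + card (S \<inter> {u..j})"
proof -
  have "S \<inter> {i..j} = (S \<inter> {i..<u}) \<union> (S \<inter> {u..j})" using assms(2,3) by auto
  then show ?thesis using assms(1) by (auto intro: card_Un_disjoint)
qed

lemma meets_demand_forced_mem:
  assumes feas: "meets_demand d m S" and "finite S"
    and ij: "1 \<le> i" "i \<le> u" "u \<le> j" "j \<le> m"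
    and demand: "d i j \<ge> card (S \<inter> {i..<u}) + (j - u + 1)"
  shows "u \<in> S"
proof (rule ccontr)
  assume "u \<notin> S"
  then have "S \<inter> {u..j} \<subseteq> {Suc u..j}" by (auto simp: Suc_le_eq order_le_less)
  then have "card (S \<inter> {u..j}) \<le> j - u"
    by (metis card_atLeastAtMost card_mono diff_Suc_Suc finite_atLeastAtMost)
  then have "card (S \<inter> {i..j}) < d i j"
    using card_Int_atLeastAtMost_split[OF \<open>finite S\<close> ij(2,3)] ij(3) demand by linarith
  moreover have "d i j \<le> card (S \<inter> {i..j})" using feas ij unfolding meets_demand_def by simp
  ultimately show False by simp
qed

lemma first_gap_above:
  fixes S :: "nat set"
  assumes "finite S"
  obtains v where "u \<le> v" "v \<notin> S" "{u..<v} \<subseteq> S"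
proof
  define v where "v = (LEAST k. u \<le> k \<and> k \<notin> S)"
  have Max_bound: "x \<le> Max (insert u S)" if "x \<in> insert u S" for x
    using Max_ge[OF _ that] assms by simp
  have "u \<le> Suc (Max (insert u S)) \<and> Suc (Max (insert u S)) \<notin> S"
    using Max_bound[of u] Max_bound[of "Suc (Max (insert u S))"] by auto
  then show "u \<le> v" "v \<notin> S"
    using LeastI[of "\<lambda>k. u \<le> k \<and> k \<notin> S"] unfolding v_def by auto
  show "{u..<v} \<subseteq> S" unfolding v_def using not_less_Least by fastforce
qed

lemma meets_demand_move_to_gap:
  assumes feas: "meets_demand d m S" and S: "S \<subseteq> {1..m}" and u: "u \<in> S"
    and unforced: "\<And>i j. 1 \<le> i \<Longrightarrow> i \<le> u \<Longrightarrow> u \<le> j \<Longrightarrow> j \<le> m \<Longrightarrow>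
                     d i j < card (S \<inter> {i..<u}) + (j - u + 1)"
    and v: "u < v" "v \<notin> S" "{u..<v} \<subseteq> S"
  shows "meets_demand d m (insert v (S - {u}) \<inter> {1..m})"
  unfolding meets_demand_def
proof (intro allI impI)
  fix i j assume "1 \<le> i \<and> i \<le> j \<and> j \<le> m"
  then have ij: "1 \<le> i" "i \<le> j" "j \<le> m" by auto
  define S' where "S' = insert v (S - {u}) \<inter> {1..m}"
  have finS: "finite S" using S finite_subset by blast
  have finS': "finite S'" unfolding S'_def by simp
  have kept: "S - {u} \<subseteq> S'" using S unfolding S'_def by auto
  have dS: "d i j \<le> card (S \<inter> {i..j})" using feas ij unfolding meets_demand_def by blast
  consider "\<not> (i \<le> u \<and> u \<le> j)" | "i \<le> u" "u \<le> j" "v \<le> j" | "i \<le> u" "u \<le> j" "j < v"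
    by linarith
  then show "d i j \<le> card (S' \<inter> {i..j})"
  proof cases
    case 1
    then have "S \<inter> {i..j} \<subseteq> S' \<inter> {i..j}" using kept by auto
    then have "card (S \<inter> {i..j}) \<le> card (S' \<inter> {i..j})" using finS' by (simp add: card_mono)
    with dS show ?thesis by simp
  next
    case 2
    have "insert v (S - {u}) \<subseteq> {1..m}" using S v(1) 2 ij by auto
    then have "S' = insert v (S - {u})" unfolding S'_def by (rule Int_absorb2)
    with 2 v(1) have "S' \<inter> {i..j} = insert v (S \<inter> {i..j} - {u})" by auto
    then have "card (S' \<inter> {i..j}) = Suc (card (S \<inter> {i..j} - {u}))" using finS v(2) by simp
    also have "\<dots> = card (S \<inter> {i..j})" using finS u 2 by (intro card_Suc_Diff1) auto
    finally show ?thesis using dS by simp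
  next
    case 3
    have "{Suc u..j} \<subseteq> S - {u}" using 3 v(3) by auto
    then have "(S \<inter> {i..<u}) \<union> {Suc u..j} \<subseteq> S' \<inter> {i..j}" using kept 3 by auto
    moreover have "card ((S \<inter> {i..<u}) \<union> {Suc u..j}) = card (S \<inter> {i..<u}) + (j - u)"
      using finS by (subst card_Un_disjoint) auto
    ultimately have "card (S \<inter> {i..<u}) + (j - u) \<le> card (S' \<inter> {i..j})"
      by (metis card_mono finS' finite_Int)
    then show ?thesis using unforced[OF ij(1) 3(1,2) ij(3)] by linarith
  qed
qed

lemma meets_demand_move_to_first_gap:
  assumes feas: "meets_demand d m S" and S: "S \<subseteq> {1..m}" and u: "u \<in> S"
    and unforced: "\<And>i j. 1 \<le> i \<Longrightarrow> i \<le> u \<Longrightarrow> u \<le> j \<Longrightarrow> j \<le> m \<Longrightarrow>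
                     d i j < card (S \<inter> {i..<u}) + (j - u + 1)"
  obtains S' where "S' \<subseteq> {1..m}" "meets_demand d m S'" "card S' \<le> card S"
    "S' \<inter> {1..u} = S \<inter> {1..<u}"
proof -
  have finS: "finite S" using S finite_subset by blast
  obtain v where v: "u \<le> v" "v \<notin> S" "{u..<v} \<subseteq> S" using first_gap_above[OF finS] .
  have uv: "u < v" using v(1,2) u by (auto simp: le_less)
  define S' where "S' = insert v (S - {u}) \<inter> {1..m}"
  have "meets_demand d m S'" unfolding S'_def using meets_demand_move_to_gap[OF assms uv v(2,3)] .
  moreover have "card S' \<le> card (insert v (S - {u}))" unfolding S'_def by (simp add: card_mono finS)
  moreover have "card (insert v (S - {u})) = card S"
    using finS v(2) card_Suc_Diff1[OF finS u] by simp
  moreover have "S' \<inter> {1..u} = S \<inter> {1..<u}" using uv S unfolding S'_def by auto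
  ultimately show thesis using that[of S'] unfolding S'_def by simp
qed

lemma greedy_idx_Int_window:
  assumes "S \<inter> {1..t} = greedy_idx d m t" "1 \<le> i" "t \<le> j"
  shows "greedy_idx d m t \<inter> {i..j} = S \<inter> {i..<Suc t}"
  using assms greedy_idx_subset[of d m t] by auto

lemma greedy_idx_exchange:
  assumes "meets_demand d m S" "S \<subseteq> {1..m}" "t \<le> m"
  shows "\<exists>S'. S' \<subseteq> {1..m} \<and> meets_demand d m S' \<and> card S' \<le> card S \<and>
           S' \<inter> {1..t} = greedy_idx d m t"
  using assms(3)
proof (induction t)
  case 0
  show ?case using assms(1,2) by (intro exI[of _ S]) simp
next
  case (Suc t)
  then obtain S' where S': "S' \<subseteq> {1..m}" "meets_demand d m S'" "card S' \<le> card S"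
    "S' \<inter> {1..t} = greedy_idx d m t"
    by auto
  have finS': "finite S'" using S'(1) finite_subset by blast
  note window = greedy_idx_Int_window[OF S'(4)]
  show ?case
  proof (cases "\<exists>i j. 1 \<le> i \<and> i \<le> Suc t \<and> Suc t \<le> j \<and> j \<le> m \<and>
      d i j \<ge> card (greedy_idx d m t \<inter> {i..j}) + (j - Suc t + 1)")
    case True
    then obtain i j where ij: "1 \<le> i" "i \<le> Suc t" "Suc t \<le> j" "j \<le> m"
      "d i j \<ge> card (greedy_idx d m t \<inter> {i..j}) + (j - Suc t + 1)"
      by blast
    then have "Suc t \<in> S'" using meets_demand_forced_mem[OF S'(2) finS' ij(1-4)] window[of i j] by simp
    moreover have "greedy_idx d m (Suc t) = insert (Suc t) (greedy_idx d m t)"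
      unfolding greedy_idx.simps using True by (rule if_P)
    ultimately have "S' \<inter> {1..Suc t} = greedy_idx d m (Suc t)"
      using S'(4) by (simp add: atLeastAtMostSuc_conv)
    then show ?thesis using S'(1-3) by blast
  next
    case False
    then have G: "greedy_idx d m (Suc t) = greedy_idx d m t"
      unfolding greedy_idx.simps by (rule if_not_P)
    show ?thesis
    proof (cases "Suc t \<in> S'")
      case False
      then have "S' \<inter> {1..Suc t} = greedy_idx d m (Suc t)"
        using G S'(4) by (simp add: atLeastAtMostSuc_conv)
      then show ?thesis using S'(1-3) by blast
    next
      case True
      have unforced: "d i j < card (S' \<inter> {i..<Suc t}) + (j - Suc t + 1)"
        if "1 \<le> i" "i \<le> Suc t" "Suc t \<le> j" "j \<le> m" for i j
      proof -
        have "\<not> d i j \<ge> card (greedy_idx d m t \<inter> {i..j}) + (j - Suc t + 1)"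
          using False that by blast
        then show ?thesis using window[of i j] that by simp
      qed
      obtain S'' where "S'' \<subseteq> {1..m}" "meets_demand d m S''" "card S'' \<le> card S'"
        "S'' \<inter> {1..Suc t} = S' \<inter> {1..<Suc t}"
        using meets_demand_move_to_first_gap[OF S'(2,1) True unforced] by blast
      moreover have "S' \<inter> {1..<Suc t} = greedy_idx d m (Suc t)"
        unfolding G atLeastLessThanSuc_atLeastAtMost by (rule S'(4))
      ultimately show ?thesis using S'(3) le_trans by metis
    qed
  qed
qed

lemma greedy_idx_optimal:
  assumes "meets_demand d m S" "S \<subseteq> {1..m}"
  shows "meets_demand d m (greedy_idx d m m)" "card (greedy_idx d m m) \<le> card S"
proof -
  obtain S' where "S' \<subseteq> {1..m}" "meets_demand d m S'" "card S' \<le> card S"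
    "S' \<inter> {1..m} = greedy_idx d m m"
    using greedy_idx_exchange[OF assms order.refl] by blast
  then show "meets_demand d m (greedy_idx d m m)" "card (greedy_idx d m m) \<le> card S"
    by (simp_all add: Int_absorb2)
qed

lemma card_le_card_if_X_disjoint:
  assumes "finite X" "X_disjoint X F" "\<And>I. I \<in> F \<Longrightarrow> I \<inter> X \<noteq> {}"
  shows "card F \<le> card X"
proof (cases "finite F")
  case True
  define p where "p I = (SOME x. x \<in> I \<inter> X)" for I
  have p: "p I \<in> I \<inter> X" if "I \<in> F" for I
    unfolding p_def by (rule someI_ex) (use assms(3)[OF that] in blast)
  have "inj_on p F"
  proof
    fix I I' assume I: "I \<in> F" "I' \<in> F" "p I = p I'"
    have "card {K \<in> F. p I \<in> K} \<le> 1" using assms(2) p[OF I(1)] unfolding X_disjoint_def by blast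
    moreover have "I \<in> {K \<in> F. p I \<in> K}" "I' \<in> {K \<in> F. p I \<in> K}"
      using p[OF I(1)] p[OF I(2)] I by auto
    ultimately show "I = I'" using True by (auto simp: card_le_Suc0_iff_eq)
  qed
  then show ?thesis using card_inj_on_le p assms(1) by blast
qed simp

lemma Max_nat_le_bound:
  fixes A :: "nat set"
  assumes "x \<in> A" "\<And>y. y \<in> A \<Longrightarrow> y \<le> b"
  shows "Max A \<le> b"
proof -
  have "finite A" using assms(2) by (auto simp: finite_nat_set_iff_bounded_le)
  then show ?thesis using assms by (intro Max.boundedI) auto
qed

lemma deltaJ_le_card:
  assumes big: "\<forall>I\<in>\<I>. card (I \<inter> pts c m) > f" and J: "J \<subseteq> Cij c i j" "card J \<le> f"
  shows "deltaJ c m \<I> i j J \<le> card (Cij c i j - J)"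
  unfolding deltaJ_def
proof (rule Max_nat_le_bound)
  show "0 \<in> {card F |F. F \<subseteq> Iij c m \<I> i j \<and> X_disjoint (Cij c i j - J) F}"
    unfolding X_disjoint_def by (auto intro!: exI[of _ "{}"])
next
  have finJ: "finite J" using J(1) finite_subset unfolding Cij_def by blast
  fix y assume "y \<in> {card F |F. F \<subseteq> Iij c m \<I> i j \<and> X_disjoint (Cij c i j - J) F}"
  then obtain F where F: "y = card F" "F \<subseteq> Iij c m \<I> i j" "X_disjoint (Cij c i j - J) F"
    by blast
  have "I \<inter> (Cij c i j - J) \<noteq> {}" if "I \<in> F" for I
  proof
    assume "I \<inter> (Cij c i j - J) = {}"
    moreover have "I \<in> \<I>" "I \<inter> pts c m \<subseteq> Cij c i j" using that F(2) unfolding Iij_def by auto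
    ultimately have "card (I \<inter> pts c m) \<le> card J" using finJ by (intro card_mono) auto
    with big \<open>I \<in> \<I>\<close> J(2) show False by fastforce
  qed
  then show "y \<le> card (Cij c i j - J)"
    using card_le_card_if_X_disjoint[OF _ F(3)] F(1) unfolding Cij_def by simp
qed

lemma delta_le_card_Cij:
  assumes "\<forall>I\<in>\<I>. card (I \<inter> pts c m) > f"
  shows "delta c m \<I> i j f \<le> card (Cij c i j)"
  unfolding delta_def
proof (rule Max_nat_le_bound)
  show "deltaJ c m \<I> i j {} \<in> {deltaJ c m \<I> i j J |J. J \<subseteq> Cij c i j \<and> card J \<le> f}" by auto
next
  fix y assume "y \<in> {deltaJ c m \<I> i j J |J. J \<subseteq> Cij c i j \<and> card J \<le> f}"
  then obtain J where "y = deltaJ c m \<I> i j J" "J \<subseteq> Cij c i j" "card J \<le> f" by blast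
  then have "y \<le> card (Cij c i j - J)" using deltaJ_le_card[OF assms] by simp
  also have "\<dots> \<le> card (Cij c i j)" unfolding Cij_def by (intro card_mono) auto
  finally show "y \<le> card (Cij c i j)" .
qed

lemma feasible_pts:
  assumes "\<forall>I\<in>\<I>. card (I \<inter> pts c m) > f"
  shows "feasible c m \<I> f (pts c m)"
  unfolding feasible_def
proof (intro allI impI)
  fix i j assume "1 \<le> i \<and> i \<le> j \<and> j \<le> m"
  then have "pts c m \<inter> Cij c i j = Cij c i j" unfolding pts_def Cij_def by auto
  then show "delta c m \<I> i j f \<le> card (pts c m \<inter> Cij c i j)"
    using delta_le_card_Cij[OF assms] by simp
qed

lemma card_image_Int_Cij:
  assumes inj: "inj_on c {1..m}" and A: "A \<subseteq> {1..m}" and "1 \<le> i" "j \<le> m"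
  shows "card (c ` A \<inter> Cij c i j) = card (A \<inter> {i..j})"
proof -
  have "{i..j} \<subseteq> {1..m}" using assms by auto
  then have "c ` A \<inter> Cij c i j = c ` (A \<inter> {i..j})"
    unfolding Cij_def using inj_on_image_Int[OF inj A] by simp
  moreover have "inj_on c (A \<inter> {i..j})" using inj_on_subset[OF inj] A by blast
  ultimately show ?thesis by (simp add: card_image)
qed

lemma feasible_image_iff:
  assumes "inj_on c {1..m}" "A \<subseteq> {1..m}"
  shows "feasible c m \<I> f (c ` A) \<longleftrightarrow> meets_demand (\<lambda>i j. delta c m \<I> i j f) m A"
  unfolding feasible_def meets_demand_def using card_image_Int_Cij[OF assms] by metis

lemma greedy_upto_eq_image:
  assumes inj: "inj_on c {1..m}" and "t \<le> m"
  shows "greedy_upto c m \<I> f t = c ` greedy_idx (\<lambda>i j. delta c m \<I> i j f) m t"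
  using assms(2)
proof (induction t)
  case 0
  then show ?case by simp
next
  case (Suc t)
  let ?d = "\<lambda>i j. delta c m \<I> i j f"
  have IH: "greedy_upto c m \<I> f t = c ` greedy_idx ?d m t" using Suc by simp
  have "greedy_idx ?d m t \<subseteq> {1..m}" using greedy_idx_subset[of ?d m t] Suc.prems by auto
  note card_eq = card_image_Int_Cij[OF inj this]
  show ?case
    unfolding greedy_upto.simps greedy_idx.simps Let_def IH
    by (simp add: card_eq cong: conj_cong)
qed

lemma greedy_eq_image:
  assumes "inj_on c {1..m}"
  shows "greedy c m \<I> f = c ` greedy_idx (\<lambda>i j. delta c m \<I> i j f) m m"
  unfolding greedy_def using greedy_upto_eq_image[OF assms order.refl] .

lemma greedy_subset_pts:
  assumes "inj_on c {1..m}"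
  shows "greedy c m \<I> f \<subseteq> pts c m"
  unfolding greedy_eq_image[OF assms] pts_def using greedy_idx_subset by (rule image_mono)

lemma greedy_optimal:
  assumes inj: "inj_on c {1..m}" and S: "S \<subseteq> pts c m" "feasible c m \<I> f S"
  shows "feasible c m \<I> f (greedy c m \<I> f)" "card (greedy c m \<I> f) \<le> card S"
proof -
  let ?d = "\<lambda>i j. delta c m \<I> i j f"
  obtain A where A: "A \<subseteq> {1..m}" "S = c ` A"
    using S(1) unfolding pts_def by (auto simp: subset_image_iff)
  have "meets_demand ?d m A" using S(2) unfolding A(2) feasible_image_iff[OF inj A(1)] .
  note A_opt = greedy_idx_optimal[OF this A(1)]
  have G: "greedy_idx ?d m m \<subseteq> {1..m}" using greedy_idx_subset .
  show "feasible c m \<I> f (greedy c m \<I> f)"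
    unfolding greedy_eq_image[OF inj] feasible_image_iff[OF inj G] by (rule A_opt(1))
  have "card (greedy c m \<I> f) = card (greedy_idx ?d m m)"
    unfolding greedy_eq_image[OF inj] using inj_on_subset[OF inj G] by (rule card_image)
  also have "\<dots> \<le> card A" by (rule A_opt(2))
  also have "\<dots> = card S"
    unfolding A(2) using inj_on_subset[OF inj A(1)] by (rule card_image[symmetric])
  finally show "card (greedy c m \<I> f) \<le> card S" .
qed

lemma opt_eq_card_greedy:
  assumes inj: "inj_on c {1..m}" and big: "\<forall>I\<in>\<I>. card (I \<inter> pts c m) > f"
  shows "opt c m \<I> f = card (greedy c m \<I> f)"
  unfolding opt_def
proof (rule Min_eqI)
  have "{card S |S. S \<subseteq> pts c m \<and> feasible c m \<I> f S} \<subseteq> card ` Pow (pts c m)" by auto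
  then show "finite {card S |S. S \<subseteq> pts c m \<and> feasible c m \<I> f S}"
    by (rule finite_subset) (simp add: pts_def)
next
  fix y assume "y \<in> {card S |S. S \<subseteq> pts c m \<and> feasible c m \<I> f S}"
  then show "card (greedy c m \<I> f) \<le> y" using greedy_optimal(2)[OF inj] by blast
next
  have "feasible c m \<I> f (greedy c m \<I> f)"
    using greedy_optimal(1)[OF inj order.refl feasible_pts[OF big]] .
  then show "card (greedy c m \<I> f) \<in> {card S |S. S \<subseteq> pts c m \<and> feasible c m \<I> f S}"
    using greedy_subset_pts[OF inj] by blast
qed

theorem lemma8:
  fixes c :: "nat \<Rightarrow> real" and m f :: nat and \<I> :: "real set set"
  assumes sorted: "\<And>a b. 1 \<le> a \<Longrightarrow> a \<le> b \<Longrightarrow> b \<le> m \<Longrightarrow> c a \<le> c b"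
    and distinct: "inj_on c {1..m}"
    and fin: "finite \<I>"
    and closed: "\<forall>I\<in>\<I>. \<exists>a b. a \<le> b \<and> I = {a..b}"
    and big: "\<forall>I\<in>\<I>. card (I \<inter> pts c m) > f"
  shows "\<forall>t \<in> {1..length (greedy_indices c m \<I> f)}.
           \<exists>Tstar \<subseteq> pts c m.
              feasible c m \<I> f Tstar \<and>
              card Tstar = opt c m \<I> f \<and>
              c ` set (take t (greedy_indices c m \<I> f)) \<subseteq> Tstar"
proof -
  have T: "greedy c m \<I> f \<subseteq> pts c m" "feasible c m \<I> f (greedy c m \<I> f)"
    "card (greedy c m \<I> f) = opt c m \<I> f"
    using greedy_subset_pts[OF distinct] opt_eq_card_greedy[OF distinct big]
      greedy_optimal(1)[OF distinct order.refl feasible_pts[OF big]] by simp_all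
  have "c ` set (take t (greedy_indices c m \<I> f)) \<subseteq> greedy c m \<I> f" for t
    using set_take_subset[of t "greedy_indices c m \<I> f"] by (force simp: greedy_indices_def)
  with T show ?thesis by blast
qed

end
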